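(* For any real $\tilde q>0$, as $n\to\infty$, $$M_{\lfloor\tilde qn\rfloor}(n,1)\sim\frac{2^{n(1+\tilde q)H\left(\frac1{1+\tilde q}\right)}}{\sqrt{2\pi}\,n^{3/2}}\,\tilde q^{-1}\,(1+\tilde q^{-1})^{\rho(n)-\frac12},$$ where $\rho(n)=\lfloor\tilde qn\rfloor-\tilde qn$ and $H$ is the binary entropy function.
   Context: $\triangle_n^{q-1}=\{\mathbf x\in\mathbb Z^q:x_i\ge0,\sum_ix_i=n\}$, $d_1(\mathbf x,\mathbf y)=\frac12\sum_i|x_i-y_i|$. $M_q(n,h)$ is the largest size of a subset of $\triangle_n^{q-1}$ with pairwise $d_1$-distances $>h$. $H(p)=-p\log_2p-(1-p)\log_2(1-p)$. $f\sim g$ means $f/g\to1$. *)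

theory Defs
  imports "HOL-Analysis.Analysis" "HOL-Library.Landau_Symbols"
begin

text \<open>The discrete disc_simplex: vectors in Z^q (coordinates indexed by 0..q-1,
  represented as functions vanishing outside {0..<q}) with nonnegative entries summing to n.\<close>
definition disc_simplex :: "nat \<Rightarrow> nat \<Rightarrow> (nat \<Rightarrow> int) set" where
  "disc_simplex q n = {x. (\<forall>i<q. x i \<ge> 0) \<and> (\<forall>i\<ge>q. x i = 0) \<and> (\<Sum>i<q. x i) = int n}"

definition d1 :: "nat \<Rightarrow> (nat \<Rightarrow> int) \<Rightarrow> (nat \<Rightarrow> int) \<Rightarrow> real" where
  "d1 q x y = (1/2) * (\<Sum>i<q. real_of_int \<bar>x i - y i\<bar>)"

definition Mq :: "nat \<Rightarrow> nat \<Rightarrow> real \<Rightarrow> nat" where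
  "Mq q n h = Max {card S | S. S \<subseteq> disc_simplex q n \<and>
       (\<forall>x\<in>S. \<forall>y\<in>S. x \<noteq> y \<longrightarrow> d1 q x y > h)}"

definition bin_entropy :: "real \<Rightarrow> real" where
  "bin_entropy p = - p * log 2 p - (1 - p) * log 2 (1 - p)"

end

theory Submission
  imports Defs "HOL-Real_Asymp.Real_Asymp"
begin

text \<open>
  Write \<open>q = \<lfloor>qt n\<rfloor>\<close> and \<open>V = C(n+q-1, n)\<close> for the number of points of the simplex. The
  theorem splits into \<open>M\<^sub>q(n,1) \<sim> V/q\<close> and a Stirling computation of \<open>V/q\<close>.

  Lower bound: two points at distance 1 differ by moving one unit from a coordinate \<open>i\<close> to a
  coordinate \<open>j\<close>, which changes \<open>\<Sum>\<^sub>k k x\<^sub>k mod q\<close> by \<open>i - j \<noteq> 0\<close>. So each residue class of this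
  weight is a code, and the largest class has at least \<open>V/q\<close> points.

  Upper bound: removing one unit from a positive coordinate of a codeword gives points of the
  simplex of size \<open>n-1\<close>, and distinct codewords give disjoint sets of such points (a common one
  would put them at distance 1). Hence codewords with at least \<open>s\<close> positive coordinates number
  at most \<open>C(n+q-2, n-1)/s\<close>, while all points with fewer than \<open>s\<close> positive coordinates number at
  most \<open>\<Sum>\<^sub>k\<^sub><\<^sub>s C(q,k) C(n-1,k-1)\<close>, a sum whose terms grow geometrically up to \<open>k \<approx> nq/(n+q)\<close>.
  Taking \<open>s \<approx> (1 - 2\<epsilon>) nq/(n+q)\<close> gives \<open>M\<^sub>q(n,1) \<le> (1 + O(\<epsilon>)) V/q\<close>.
\<close>

section \<open>Stirling's formula\<close>

definition stirling_remainder :: "nat \<Rightarrow> real" where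
  "stirling_remainder n = ln (fact n) - (real n + 1/2) * ln (real n) + real n"

lemma ln_fact_eq_stirling:
  "n \<ge> 1 \<Longrightarrow> ln (fact n) = (real n + 1/2) * ln (real n) - real n + stirling_remainder n"
  unfolding stirling_remainder_def by simp

lemma stirling_remainder_diff:
  "stirling_remainder n - stirling_remainder (Suc n)
     = (real n + 1/2) * (ln (real n + 1) - ln (real n)) - 1"
proof -
  have "ln (fact (Suc n) :: real) = ln (real n + 1) + ln (fact n)"
    by (simp add: ln_mult add.commute)
  thus ?thesis unfolding stirling_remainder_def by (simp add: algebra_simps)
qed

lemma stirling_remainder_Suc_le:
  assumes "n \<ge> 1"
  shows "stirling_remainder (Suc n) \<le> stirling_remainder n"
proof -
  have "ln (real n + 1) - ln (real n) \<ge> 2 * ((real n + 1) - real n) / (real n + (real n + 1))"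
    by (rule ln_inverse_approx_ge) (use assms in auto)
  hence "(real n + 1/2) * (ln (real n + 1) - ln (real n)) \<ge> (real n + 1/2) * (2 / (2 * real n + 1))"
    by (intro mult_left_mono) auto
  also have "(real n + 1/2) * (2 / (2 * real n + 1)) = 1" by (simp add: field_simps)
  finally show ?thesis using stirling_remainder_diff[of n] by simp
qed

lemma stirling_remainder_diff_le:
  assumes "n \<ge> 1"
  shows "stirling_remainder n - stirling_remainder (Suc n) \<le> 1/4 * (1 / real n - 1 / real (Suc n))"
proof -
  have n: "real n > 0" using assms by simp
  have "ln (real n + 1) - ln (real n) \<le> (inverse (real n) + inverse (real n + 1)) / 2"
    using ln_inverse_approx_le[of "real n" 1] assms by simp
  hence "(real n + 1/2) * (ln (real n + 1) - ln (real n))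
      \<le> (real n + 1/2) * ((inverse (real n) + inverse (real n + 1)) / 2)"
    by (intro mult_left_mono) auto
  also have "\<dots> = 1 + 1/4 * (1 / real n - 1 / real (Suc n))"
    using n by (simp add: field_simps, simp add: divide_simps algebra_simps, smt (verit) mult_pos_pos)
  finally show ?thesis using stirling_remainder_diff[of n] by linarith
qed

lemma stirling_remainder_ge:
  assumes "n \<ge> 1"
  shows "stirling_remainder n \<ge> stirling_remainder 1 - 1/4"
proof -
  have "stirling_remainder 1 - stirling_remainder n \<le> 1/4 * (1 - 1 / real n)"
    using assms
  proof (induction n rule: dec_induct)
    case (step m)
    have "stirling_remainder 1 - stirling_remainder (Suc m)
        = (stirling_remainder 1 - stirling_remainder m) + (stirling_remainder m - stirling_remainder (Suc m))"
      by simp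
    also have "\<dots> \<le> 1/4 * (1 - 1 / real m) + 1/4 * (1 / real m - 1 / real (Suc m))"
      using step stirling_remainder_diff_le[of m] by linarith
    finally show ?case by argo
  qed simp
  moreover have "1/4 * (1 - 1 / real n) \<le> 1/4" by simp
  ultimately show ?thesis by linarith
qed

lemma stirling_remainder_convergent: "convergent stirling_remainder"
proof -
  have "decseq (\<lambda>n. stirling_remainder (Suc n))"
    by (rule decseq_SucI) (simp add: stirling_remainder_Suc_le)
  moreover have "\<forall>i. stirling_remainder 1 - 1/4 \<le> stirling_remainder (Suc i)"
    using stirling_remainder_ge by simp
  ultimately obtain L where "(\<lambda>n. stirling_remainder (Suc n)) \<longlonglongrightarrow> L"
    by (rule decseq_convergent)
  thus ?thesis by (auto simp: convergent_def dest: LIMSEQ_imp_Suc)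
qed

lemma wallis_partial_product_step:
  fixes p f g x :: real
  assumes "p * f^2 * (2*x+1) = g^4" "x \<ge> 0"
  shows "p * ((4*(x+1)^2) / ((2*x+1) * (2*x+3))) * (f * (2*x+1) * (2*x+2))^2 * (2*x+3)
         = (g * (2*x+2))^4"
proof -
  have "(2*x+1) * (2*x+3) \<noteq> 0" using assms(2) by simp
  hence "p * ((4*(x+1)^2) / ((2*x+1) * (2*x+3))) * (f * (2*x+1) * (2*x+2))^2 * (2*x+3)
      = (p * f^2 * (2*x+1)) * (2*x+2)^4"
    by (simp add: field_simps power2_eq_square power4_eq_xxxx)
  thus ?thesis using assms(1) by (simp add: power_mult_distrib)
qed

lemma wallis_partial_product:
  "(\<Prod>k=1..n. (4 * real k^2) / (4 * real k^2 - 1)) * (fact (2*n))^2 * (2 * real n + 1)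
     = (2^n * fact n)^4"
proof (induction n)
  case (Suc n)
  have "(\<Prod>k=1..Suc n. (4 * real k^2) / (4 * real k^2 - 1))
      = (\<Prod>k=1..n. (4 * real k^2) / (4 * real k^2 - 1))
        * ((4 * (real n + 1)^2) / ((2 * real n + 1) * (2 * real n + 3)))"
    by (simp add: algebra_simps power2_eq_square)
  moreover have "(fact (2 * Suc n) :: real) = fact (2*n) * (2 * real n + 1) * (2 * real n + 2)"
    by (simp add: algebra_simps)
  moreover have "(2::real) ^ Suc n * fact (Suc n) = 2^n * fact n * (2 * real n + 2)"
    by (simp add: algebra_simps)
  moreover have "2 * real (Suc n) + 1 = 2 * real n + 3" by simp
  ultimately show ?case by (simp only:) (rule wallis_partial_product_step[OF Suc.IH], simp)
qed simp

text \<open>Wallis' product relates \<open>(n!)\<^sup>4\<close> to \<open>((2n)!)\<^sup>2\<close>, which pins down the limit of the remainder.\<close>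

lemma stirling_remainder_tendsto: "stirling_remainder \<longlonglongrightarrow> ln (2*pi) / 2"
proof -
  obtain L where L: "stirling_remainder \<longlonglongrightarrow> L"
    using stirling_remainder_convergent by (auto simp: convergent_def)
  define P where "P n = (\<Prod>k=1..n. (4 * real k^2) / (4 * real k^2 - 1))" for n
  define R where "R n = 4 * stirling_remainder n - 2 * stirling_remainder (2*n) - ln 2
                        + (ln (real n) - ln (2 * real n + 1))" for n
  have P_pos: "P n > 0" for n
  proof -
    have "4 * real k^2 > 1" if "k \<ge> 1" for k
      using that by (smt (verit) of_nat_1 of_nat_le_iff one_le_power)
    thus ?thesis unfolding P_def by (intro prod_pos) (auto intro!: divide_pos_pos)
  qed
  have ln_P: "ln (P n) = R n" if n: "n \<ge> 1" for n
  proof -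
    have "ln (P n * (fact (2*n))^2 * (2 * real n + 1)) = ln ((2^n * fact n)^4)"
      using wallis_partial_product[of n] by (simp add: P_def)
    hence "ln (P n) + 2 * ln (fact (2*n)) + ln (2 * real n + 1) = 4 * (real n * ln 2 + ln (fact n))"
      using P_pos[of n] by (simp add: ln_mult ln_realpow)
    thus ?thesis
      using ln_fact_eq_stirling[of "2*n"] ln_fact_eq_stirling[OF n] n
      by (simp add: R_def ln_mult algebra_simps)
  qed
  have "eventually (\<lambda>n. ln (P n) = R n) sequentially"
    using eventually_ge_at_top[of "1::nat"] by eventually_elim (rule ln_P)
  moreover have "(\<lambda>n. ln (P n)) \<longlonglongrightarrow> ln (pi/2)"
    using wallis unfolding P_def by (intro tendsto_intros) auto
  ultimately have "R \<longlonglongrightarrow> ln (pi/2)" by (rule Lim_transform_eventually[rotated])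
  moreover have "R \<longlonglongrightarrow> 4*L - 2*L - ln 2 + (- ln 2)"
  proof -
    have "(stirling_remainder \<circ> (\<lambda>n. 2*n)) \<longlonglongrightarrow> L"
      by (rule LIMSEQ_subseq_LIMSEQ[OF L]) (simp add: strict_mono_def)
    moreover have "(\<lambda>n. ln (real n) - ln (2 * real n + 1)) \<longlonglongrightarrow> - ln 2"
      by real_asymp
    ultimately show ?thesis unfolding R_def o_def by (intro tendsto_intros L)
  qed
  ultimately have "4*L - 2*L - ln 2 + (- ln 2) = ln (pi/2)" by (rule LIMSEQ_unique[rotated])
  hence "L = ln (2*pi) / 2" by (simp add: ln_div ln_mult)
  with L show ?thesis by simp
qed

section \<open>Counting points of the simplex\<close>

definition simplex_on :: "nat set \<Rightarrow> nat \<Rightarrow> (nat \<Rightarrow> int) set" where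
  "simplex_on I n = {x. (\<forall>i\<in>I. x i \<ge> 0) \<and> (\<forall>i. i \<notin> I \<longrightarrow> x i = 0) \<and> sum x I = int n}"

lemma disc_simplex_eq_simplex_on: "disc_simplex q n = simplex_on {..<q} n"
  unfolding disc_simplex_def simplex_on_def by auto

lemma simplex_on_empty: "simplex_on {} n = (if n = 0 then {\<lambda>_. 0} else {})"
  unfolding simplex_on_def by (auto simp: fun_eq_iff)

lemma simplex_on_insert:
  assumes "a \<notin> I" "finite I"
  shows "simplex_on (insert a I) n = (\<Union>k\<le>n. (\<lambda>x. x(a := int k)) ` simplex_on I (n - k))"
proof (intro equalityI subsetI)
  fix x assume x: "x \<in> simplex_on (insert a I) n"
  hence nonneg: "\<forall>i\<in>I. x i \<ge> 0" "x a \<ge> 0" and zero: "\<forall>i. i \<notin> insert a I \<longrightarrow> x i = 0"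
    and sum: "x a + sum x I = int n"
    using assms unfolding simplex_on_def by auto
  define k where "k = nat (x a)"
  have k: "int k = x a" "k \<le> n"
    using nonneg sum sum_nonneg[of I x] unfolding k_def by auto
  have "sum (x(a := 0)) I = sum x I" using assms(1) by (intro sum.cong) auto
  hence "x(a := 0) \<in> simplex_on I (n - k)"
    using nonneg zero sum k unfolding simplex_on_def by (auto simp: of_nat_diff)
  moreover have "x = (x(a := 0))(a := int k)" using k by simp
  ultimately show "x \<in> (\<Union>k\<le>n. (\<lambda>x. x(a := int k)) ` simplex_on I (n - k))"
    using k by blast
next
  fix y assume "y \<in> (\<Union>k\<le>n. (\<lambda>x. x(a := int k)) ` simplex_on I (n - k))"
  then obtain k x where k: "k \<le> n" and x: "x \<in> simplex_on I (n - k)" and y: "y = x(a := int k)"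
    by auto
  have "sum y I = sum x I" unfolding y using assms by (intro sum.cong) auto
  hence "sum y (insert a I) = int k + int (n - k)"
    using x y assms unfolding simplex_on_def by simp
  thus "y \<in> simplex_on (insert a I) n" using x y k unfolding simplex_on_def by auto
qed

lemma sum_choose_add_minus_one: "(\<Sum>k\<le>n. (c + k - 1) choose k) = (n + c) choose n"
proof (cases c)
  case 0
  have "(\<Sum>k\<le>n. (k - 1) choose k) = (\<Sum>k\<le>n. if k = 0 then 1 else 0)"
    by (rule sum.cong) auto
  thus ?thesis using 0 by simp
next
  case (Suc r)
  thus ?thesis using sum_choose_lower[of r n] by (simp add: ac_simps)
qed

lemma finite_card_simplex_on:
  "finite I \<Longrightarrow> finite (simplex_on I n) \<and> card (simplex_on I n) = (n + card I - 1) choose n"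
proof (induction I arbitrary: n rule: finite_induct)
  case empty then show ?case by (simp add: simplex_on_empty)
next
  case (insert a I)
  let ?piece = "\<lambda>k. (\<lambda>x. x(a := int k)) ` simplex_on I (n - k)"
  have inj: "inj_on (\<lambda>x. x(a := int k)) (simplex_on I m)" for k m
  proof (rule inj_onI)
    fix x y assume "x \<in> simplex_on I m" "y \<in> simplex_on I m" "x(a := int k) = y(a := int k)"
    moreover have "x a = 0" "y a = 0" using calculation insert(2) unfolding simplex_on_def by auto
    ultimately show "x = y" by (metis fun_upd_triv fun_upd_upd)
  qed
  have disjoint: "disjoint_family_on ?piece {..n}"
  proof (unfold disjoint_family_on_def, intro ballI impI)
    fix k l :: nat assume "k \<noteq> l"
    show "?piece k \<inter> ?piece l = {}"
    proof (rule ccontr)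
      assume "?piece k \<inter> ?piece l \<noteq> {}"
      then obtain x y where "x(a := int k) = y(a := int l)" by blast
      hence "int k = int l" by (metis fun_upd_same)
      with \<open>k \<noteq> l\<close> show False by simp
    qed
  qed
  have finite: "finite (?piece k)" for k using insert(3) by blast
  have "card (simplex_on (insert a I) n) = (\<Sum>k\<le>n. card (?piece k))"
    unfolding simplex_on_insert[OF insert(2,1)]
    by (rule card_UN_disjoint) (use disjoint finite in \<open>auto simp: disjoint_family_on_def\<close>)
  also have "\<dots> = (\<Sum>k\<le>n. (n - k + card I - 1) choose (n - k))"
    by (intro sum.cong refl) (simp add: card_image[OF inj] insert(3))
  also have "\<dots> = (\<Sum>k\<le>n. (card I + k - 1) choose k)"
    by (rule sum.reindex_bij_witness[of _ "\<lambda>k. n - k" "\<lambda>k. n - k"]) (auto simp: add.commute)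
  also have "\<dots> = (n + card I) choose n" by (rule sum_choose_add_minus_one)
  finally show ?case
    using insert(1,2) finite unfolding simplex_on_insert[OF insert(2,1)] by simp
qed

lemma finite_disc_simplex: "finite (disc_simplex q n)"
  using finite_card_simplex_on[of "{..<q}" n] by (simp add: disc_simplex_eq_simplex_on)

lemma card_disc_simplex: "card (disc_simplex q n) = (n + q - 1) choose n"
  using finite_card_simplex_on[of "{..<q}" n] by (simp add: disc_simplex_eq_simplex_on)

lemma card_disc_simplex_pos: "q \<ge> 1 \<Longrightarrow> card (disc_simplex q n) > 0"
  by (simp add: card_disc_simplex)

lemma volume_div_pos: "q \<ge> 1 \<Longrightarrow> real (card (disc_simplex q n)) / real q > 0"
  using card_disc_simplex_pos[of q n] by (simp add: divide_pos_pos)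

section \<open>Codes in the simplex\<close>

definition separated :: "nat \<Rightarrow> real \<Rightarrow> (nat \<Rightarrow> int) set \<Rightarrow> bool" where
  "separated q h S \<longleftrightarrow> (\<forall>x\<in>S. \<forall>y\<in>S. x \<noteq> y \<longrightarrow> d1 q x y > h)"

lemma Mq_eq_Max: "Mq q n h = Max {card S | S. S \<subseteq> disc_simplex q n \<and> separated q h S}"
  unfolding Mq_def separated_def ..

lemma finite_code_sizes: "finite {card S | S. S \<subseteq> disc_simplex q n \<and> separated q h S}"
  by (rule finite_subset[of _ "{..card (disc_simplex q n)}"])
     (auto intro!: card_mono finite_disc_simplex)

lemma card_le_Mq:
  assumes "S \<subseteq> disc_simplex q n" "separated q h S"
  shows "card S \<le> Mq q n h"
  unfolding Mq_eq_Max by (rule Max_ge[OF finite_code_sizes]) (use assms in blast)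

lemma Mq_attained:
  obtains S where "S \<subseteq> disc_simplex q n" "separated q h S" "card S = Mq q n h"
proof -
  have "card {} \<in> {card S | S. S \<subseteq> disc_simplex q n \<and> separated q h S}"
    by (rule CollectI, rule exI[of _ "{}"]) (simp add: separated_def)
  hence "Mq q n h \<in> {card S | S. S \<subseteq> disc_simplex q n \<and> separated q h S}"
    unfolding Mq_eq_Max by (intro Max_in[OF finite_code_sizes]) blast
  thus ?thesis using that by auto
qed

lemma sum_abs_le_two_pos_neg:
  fixes d :: "nat \<Rightarrow> int"
  assumes "finite A" "i \<in> A" "j \<in> A" "i \<noteq> j" "d i > 0" "d j < 0" "(\<Sum>k\<in>A. \<bar>d k\<bar>) \<le> 2"
  shows "d i = 1 \<and> d j = -1 \<and> (\<forall>k\<in>A - {i, j}. d k = 0)"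
proof -
  have "(\<Sum>k\<in>A. \<bar>d k\<bar>) = \<bar>d i\<bar> + \<bar>d j\<bar> + (\<Sum>k\<in>A - {i, j}. \<bar>d k\<bar>)"
    using assms(1-4) by (subst sum.subset_diff[of "{i,j}"]) auto
  moreover have "(\<Sum>k\<in>A - {i, j}. \<bar>d k\<bar>) \<ge> 0" by (rule sum_nonneg) simp
  ultimately have "d i = 1" "d j = -1" "(\<Sum>k\<in>A - {i, j}. \<bar>d k\<bar>) = 0"
    using assms(5-7) by linarith+
  thus ?thesis using assms(1) by (simp add: sum_nonneg_eq_0_iff)
qed

lemma d1_le_one_imp_unit_move:
  assumes x: "x \<in> disc_simplex q n" and y: "y \<in> disc_simplex q n" and "x \<noteq> y"
    and "d1 q x y \<le> 1"
  obtains i j where "i < q" "j < q" "i \<noteq> j" "x i - y i = 1" "x j - y j = -1"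
    "\<forall>k<q. k \<noteq> i \<longrightarrow> k \<noteq> j \<longrightarrow> x k = y k"
proof -
  define e where "e k = x k - y k" for k
  have outside: "\<forall>k\<ge>q. e k = 0" and sum_e: "(\<Sum>k<q. e k) = 0"
    using x y unfolding disc_simplex_def e_def by (auto simp: sum_subtractf)
  have "real_of_int (\<Sum>k<q. \<bar>e k\<bar>) \<le> 2" using assms(4) unfolding d1_def e_def by simp
  hence abs_le: "(\<Sum>k<q. \<bar>e k\<bar>) \<le> 2" by linarith
  obtain k0 where "e k0 \<noteq> 0" using \<open>x \<noteq> y\<close> unfolding e_def by (auto simp: fun_eq_iff)
  with outside have k0: "k0 < q" "e k0 \<noteq> 0" using not_le by blast+
  have "\<exists>i<q. e i > 0"
  proof (rule ccontr)
    assume "\<not> ?thesis"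
    moreover have "(\<Sum>k<q. - e k) = 0" using sum_e by (simp add: sum_negf)
    ultimately have "\<forall>k\<in>{..<q}. - e k = 0" by (subst (asm) sum_nonneg_eq_0_iff) auto
    with k0 show False by auto
  qed
  moreover have "\<exists>j<q. e j < 0"
  proof (rule ccontr)
    assume "\<not> ?thesis"
    hence "\<forall>k\<in>{..<q}. e k = 0" using sum_e by (subst (asm) sum_nonneg_eq_0_iff) auto
    with k0 show False by auto
  qed
  ultimately obtain i j where ij: "i < q" "j < q" "e i > 0" "e j < 0" by blast
  hence "i \<noteq> j" by auto
  have "e i = 1 \<and> e j = -1 \<and> (\<forall>k\<in>{..<q} - {i, j}. e k = 0)"
    by (rule sum_abs_le_two_pos_neg) (use ij \<open>i \<noteq> j\<close> abs_le in auto)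
  then show ?thesis using ij \<open>i \<noteq> j\<close> unfolding e_def by (intro that[of i j]) auto
qed

section \<open>The lower bound\<close>

definition weight_class :: "nat \<Rightarrow> (nat \<Rightarrow> int) \<Rightarrow> int" where
  "weight_class q x = (\<Sum>k<q. int k * x k) mod int q"

lemma separated_weight_class:
  "separated q 1 {x \<in> disc_simplex q n. weight_class q x = c}"
  unfolding separated_def
proof (intro ballI impI)
  fix x y assume x: "x \<in> {x \<in> disc_simplex q n. weight_class q x = c}"
    and y: "y \<in> {x \<in> disc_simplex q n. weight_class q x = c}" and "x \<noteq> y"
  show "d1 q x y > 1"
  proof (rule ccontr)
    assume "\<not> d1 q x y > 1"
    hence close: "d1 q x y \<le> 1" by simp
    have "x \<in> disc_simplex q n" "y \<in> disc_simplex q n" using x y by simp_all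
    then obtain i j where ij: "i < q" "j < q" "i \<noteq> j" "x i - y i = 1" "x j - y j = -1"
      and rest: "\<forall>k<q. k \<noteq> i \<longrightarrow> k \<noteq> j \<longrightarrow> x k = y k"
      using d1_le_one_imp_unit_move \<open>x \<noteq> y\<close> close by blast
    have "(\<Sum>k<q. int k * x k) - (\<Sum>k<q. int k * y k) = (\<Sum>k<q. int k * (x k - y k))"
      by (simp add: sum_subtractf algebra_simps)
    also have "\<dots> = (\<Sum>k\<in>{i,j}. int k * (x k - y k))"
      by (rule sum.mono_neutral_right) (use ij rest in auto)
    also have "\<dots> = int i - int j" using ij by simp
    moreover have "weight_class q x = weight_class q y" using x y by simp
    ultimately have "int q dvd int i - int j"
      unfolding weight_class_def by (simp add: mod_eq_dvd_iff)
    moreover have "int i - int j \<noteq> 0" using ij by simp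
    ultimately have "\<bar>int q\<bar> \<le> \<bar>int i - int j\<bar>" by (rule dvd_imp_le_int[rotated])
    thus False using ij by linarith
  qed
qed

lemma card_disc_simplex_div_le_Mq:
  assumes "q \<ge> 1"
  shows "real (card (disc_simplex q n)) / real q \<le> real (Mq q n 1)"
proof -
  define C where "C c = {x \<in> disc_simplex q n. weight_class q x = int c}" for c :: nat
  have cover: "disc_simplex q n = (\<Union>c<q. C c)"
  proof (intro equalityI subsetI)
    fix x assume x: "x \<in> disc_simplex q n"
    have "0 \<le> weight_class q x" "weight_class q x < int q"
      using assms unfolding weight_class_def by auto
    hence "nat (weight_class q x) < q" "weight_class q x = int (nat (weight_class q x))" by auto
    thus "x \<in> (\<Union>c<q. C c)" using x unfolding C_def by blast
  qed (auto simp: C_def)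
  have "card (disc_simplex q n) \<le> (\<Sum>c<q. card (C c))"
    unfolding cover by (rule card_UN_le) simp
  hence sum_ge: "real (card (disc_simplex q n)) \<le> (\<Sum>c<q. real (card (C c)))"
    by (metis of_nat_le_iff of_nat_sum)
  have "\<exists>c<q. real (card (disc_simplex q n)) / real q \<le> real (card (C c))"
  proof (rule ccontr)
    assume "\<not> ?thesis"
    hence "\<forall>c<q. real (card (C c)) < real (card (disc_simplex q n)) / real q" by auto
    hence "(\<Sum>c<q. real (card (C c))) < (\<Sum>c<q. real (card (disc_simplex q n)) / real q)"
      using assms by (intro sum_strict_mono) (auto simp: lessThan_empty_iff)
    also have "\<dots> = real (card (disc_simplex q n))" using assms by simp
    finally show False using sum_ge by simp
  qed
  then obtain c where "real (card (disc_simplex q n)) / real q \<le> real (card (C c))" by blast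
  moreover have "card (C c) \<le> Mq q n 1"
    by (rule card_le_Mq) (auto simp: C_def separated_weight_class)
  ultimately show ?thesis by linarith
qed

section \<open>The upper bound\<close>

definition support :: "nat \<Rightarrow> (nat \<Rightarrow> int) \<Rightarrow> nat set" where
  "support q x = {i \<in> {..<q}. x i > 0}"

lemma finite_support [simp]: "finite (support q x)"
  unfolding support_def by simp

definition down_shifts :: "nat \<Rightarrow> (nat \<Rightarrow> int) \<Rightarrow> (nat \<Rightarrow> int) set" where
  "down_shifts q x = (\<lambda>i. x(i := x i - 1)) ` support q x"

lemma card_down_shifts: "card (down_shifts q x) = card (support q x)"
  unfolding down_shifts_def
proof (rule card_image, rule inj_onI)
  fix i j assume "x(i := x i - 1) = x(j := x j - 1)"
  from fun_cong[OF this, of i] show "i = j" by (auto split: if_splits)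
qed

lemma down_shifts_subset:
  assumes "x \<in> disc_simplex q n"
  shows "down_shifts q x \<subseteq> disc_simplex q (n - 1)"
proof
  fix z assume "z \<in> down_shifts q x"
  then obtain i where i: "i < q" "x i > 0" and z: "z = x(i := x i - 1)"
    unfolding down_shifts_def support_def by auto
  have x: "\<forall>i<q. x i \<ge> 0" "\<forall>i\<ge>q. x i = 0" "(\<Sum>i<q. x i) = int n"
    using assms unfolding disc_simplex_def by auto
  have "x i \<le> (\<Sum>i<q. x i)" using i x(1) by (intro member_le_sum) auto
  hence "n \<ge> 1" using i x(3) by linarith
  moreover have "(\<Sum>k<q. z k) = (\<Sum>k<q. x k) - 1"
    unfolding z using i by (simp add: sum.remove[of "{..<q}" i])
  ultimately have "(\<Sum>k<q. z k) = int (n - 1)" using x(3) by simp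
  moreover have "\<forall>k<q. z k \<ge> 0" "\<forall>k\<ge>q. z k = 0" using x i unfolding z by auto
  ultimately show "z \<in> disc_simplex q (n - 1)" unfolding disc_simplex_def by blast
qed

lemma down_shifts_disjoint:
  assumes "separated q 1 S" "x \<in> S" "y \<in> S" "x \<noteq> y"
  shows "down_shifts q x \<inter> down_shifts q y = {}"
proof (rule ccontr)
  assume "down_shifts q x \<inter> down_shifts q y \<noteq> {}"
  then obtain i j where i: "i < q" and j: "j < q" and eq: "x(i := x i - 1) = y(j := y j - 1)"
    unfolding down_shifts_def support_def by auto
  show False
  proof (cases "i = j")
    case True
    have "x k = y k" for k using fun_cong[OF eq, of k] True by (cases "k = i") auto
    hence "x = y" by blast
    with assms(4) show False by simp
  next
    case False
    have diff: "x k - y k = (if k = i then 1 else if k = j then -1 else 0)" for k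
      using fun_cong[OF eq, of k] False by (cases "k = i"; cases "k = j") auto
    have "(\<Sum>k<q. real_of_int \<bar>x k - y k\<bar>) = (\<Sum>k\<in>{i,j}. real_of_int \<bar>x k - y k\<bar>)"
      by (rule sum.mono_neutral_right) (use i j diff in auto)
    also have "\<dots> = 2" using diff False by simp
    finally have "d1 q x y = 1" unfolding d1_def by simp
    moreover have "d1 q x y > 1" using assms unfolding separated_def by blast
    ultimately show False by simp
  qed
qed

lemma card_code_le:
  assumes "s \<ge> 1" "S \<subseteq> disc_simplex q n" "separated q 1 S"
  shows "real (card S) \<le> real (card {x \<in> disc_simplex q n. card (support q x) < s})
                        + real (card (disc_simplex q (n - 1))) / real s"
proof -
  have finS: "finite S" using assms(2) finite_disc_simplex by (rule finite_subset)
  define S1 where "S1 = {x \<in> S. card (support q x) < s}"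
  define S2 where "S2 = {x \<in> S. \<not> card (support q x) < s}"
  have "S = S1 \<union> S2" "S1 \<inter> S2 = {}" unfolding S1_def S2_def by auto
  hence "card S = card S1 + card S2" using finS by (metis card_Un_disjoint finite_Un)
  moreover have "card S1 \<le> card {x \<in> disc_simplex q n. card (support q x) < s}"
    using assms(2) by (intro card_mono) (auto simp: S1_def finite_disc_simplex)
  moreover have "real (card S2) \<le> real (card (disc_simplex q (n - 1))) / real s"
  proof -
    have "s * card S2 \<le> (\<Sum>x\<in>S2. card (support q x))"
      using sum_mono[of S2 "\<lambda>_. s" "\<lambda>x. card (support q x)"] by (auto simp: S2_def mult.commute)
    also have "\<dots> = card (\<Union>x\<in>S2. down_shifts q x)"
    proof (subst card_UN_disjoint)
      show "finite S2" using finS by (simp add: S2_def)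
      show "\<forall>x\<in>S2. finite (down_shifts q x)" by (simp add: down_shifts_def)
      show "\<forall>x\<in>S2. \<forall>y\<in>S2. x \<noteq> y \<longrightarrow> down_shifts q x \<inter> down_shifts q y = {}"
        using down_shifts_disjoint[OF assms(3)] by (auto simp: S2_def)
    qed (simp add: card_down_shifts)
    also have "\<dots> \<le> card (disc_simplex q (n - 1))"
      using down_shifts_subset assms(2)
      by (intro card_mono[OF finite_disc_simplex]) (auto simp: S2_def)
    finally have "real s * real (card S2) \<le> real (card (disc_simplex q (n - 1)))"
      by (metis of_nat_le_iff of_nat_mult)
    thus ?thesis using assms(1) by (simp add: field_simps)
  qed
  ultimately show ?thesis by simp
qed

lemma card_support_pos:
  assumes "x \<in> disc_simplex q n" "n \<ge> 1"
  shows "card (support q x) \<ge> 1"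
proof -
  have "support q x \<noteq> {}"
  proof
    assume "support q x = {}"
    hence "\<forall>i<q. x i \<le> 0" by (auto simp: support_def)
    hence "(\<Sum>i<q. x i) \<le> 0" by (intro sum_nonpos) auto
    thus False using assms unfolding disc_simplex_def by auto
  qed
  thus ?thesis by (simp add: Suc_le_eq card_gt_0_iff)
qed

lemma disc_simplex_support:
  assumes "x \<in> disc_simplex q n"
  shows "(\<forall>i\<in>support q x. x i \<ge> 1) \<and> (\<forall>i. i \<notin> support q x \<longrightarrow> x i = 0)
           \<and> sum x (support q x) = int n"
proof -
  have zero: "\<forall>i. i \<notin> support q x \<longrightarrow> x i = 0"
  proof (intro allI impI)
    fix i assume "i \<notin> support q x"
    thus "x i = 0" using assms unfolding disc_simplex_def support_def
      by (cases "i < q") (auto simp: not_less)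
  qed
  hence "sum x (support q x) = (\<Sum>i<q. x i)"
    by (intro sum.mono_neutral_left) (auto simp: support_def)
  hence "sum x (support q x) = int n" using assms unfolding disc_simplex_def by simp
  moreover have "\<forall>i\<in>support q x. x i \<ge> 1" by (simp add: support_def)
  ultimately show ?thesis using zero by blast
qed

text \<open>Subtracting 1 on \<open>J\<close> injects the points with support \<open>J\<close> into \<open>simplex_on J (n - k)\<close>.\<close>

lemma card_support_eq_le:
  assumes J: "J \<subseteq> {..<q}" "card J = k" "k \<ge> 1"
  shows "card {x \<in> disc_simplex q n. support q x = J} \<le> (n - 1) choose (k - 1)"
proof (cases "k \<le> n")
  case False
  have "{x \<in> disc_simplex q n. support q x = J} = {}"
  proof (intro equals0I)
    fix x assume x: "x \<in> {x \<in> disc_simplex q n. support q x = J}"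
    hence "(\<Sum>i\<in>J. (1::int)) \<le> sum x J"
      using disc_simplex_support[of x q n] by (intro sum_mono) auto
    thus False using x J(2) False disc_simplex_support[of x q n] by simp
  qed
  thus ?thesis by (metis card.empty le0)
next
  case True
  have finJ: "finite J" using J(1) finite_subset by blast
  define lower where "lower x = (\<lambda>i. if i \<in> J then x i - 1 else x i)" for x :: "nat \<Rightarrow> int"
  have inj: "inj_on lower {x \<in> disc_simplex q n. support q x = J}"
  proof (rule inj_onI)
    fix x y assume eq: "lower x = lower y"
    show "x = y"
    proof
      fix i show "x i = y i" using fun_cong[OF eq, of i] unfolding lower_def by (cases "i \<in> J") auto
    qed
  qed
  have image: "lower ` {x \<in> disc_simplex q n. support q x = J} \<subseteq> simplex_on J (n - k)"
  proof
    fix z assume "z \<in> lower ` {x \<in> disc_simplex q n. support q x = J}"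
    then obtain x where x: "x \<in> disc_simplex q n" "support q x = J" and z: "z = lower x" by blast
    have "sum z J = sum x J - int k" unfolding z lower_def using J(2) by (simp add: sum_subtractf)
    thus "z \<in> simplex_on J (n - k)"
      using disc_simplex_support[OF x(1)] x(2) True unfolding simplex_on_def z lower_def by auto
  qed
  have "card {x \<in> disc_simplex q n. support q x = J} = card (lower ` {x \<in> disc_simplex q n. support q x = J})"
    by (rule card_image[OF inj, symmetric])
  also have "\<dots> \<le> card (simplex_on J (n - k))"
    using finite_card_simplex_on[OF finJ, of "n - k"] image by (intro card_mono) auto
  also have "\<dots> = (n - 1) choose (n - k)"
    using finite_card_simplex_on[OF finJ, of "n - k"] J(2,3) True by simp
  also have "\<dots> = (n - 1) choose (k - 1)"
    using binomial_symmetric[of "k - 1" "n - 1"] J(3) True by simp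
  finally show ?thesis .
qed

lemma card_small_support_le:
  assumes "n \<ge> 1"
  shows "card {x \<in> disc_simplex q n. card (support q x) < s}
           \<le> (\<Sum>k\<in>{1..<s}. (q choose k) * ((n - 1) choose (k - 1)))"
proof -
  define F where "F J = {x \<in> disc_simplex q n. support q x = J}" for J
  define Sub where "Sub k = {J. J \<subseteq> {..<q} \<and> card J = k}" for k
  have finite_Sub: "finite (Sub k)" for k
    unfolding Sub_def by (rule finite_subset[of _ "Pow {..<q}"]) auto
  have "{x \<in> disc_simplex q n. card (support q x) < s} \<subseteq> (\<Union>k\<in>{1..<s}. \<Union>J\<in>Sub k. F J)"
    using card_support_pos[OF _ assms] by (auto simp: Sub_def F_def support_def)
  hence "card {x \<in> disc_simplex q n. card (support q x) < s} \<le> card (\<Union>k\<in>{1..<s}. \<Union>J\<in>Sub k. F J)"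
    by (rule card_mono[rotated]) (auto simp: F_def finite_Sub finite_disc_simplex)
  also have "\<dots> \<le> (\<Sum>k\<in>{1..<s}. \<Sum>J\<in>Sub k. card (F J))"
    by (rule order_trans[OF card_UN_le sum_mono]) (auto intro: card_UN_le finite_Sub)
  also have "\<dots> \<le> (\<Sum>k\<in>{1..<s}. \<Sum>J\<in>Sub k. (n - 1) choose (k - 1))"
    unfolding F_def Sub_def by (intro sum_mono card_support_eq_le) auto
  also have "\<dots> = (\<Sum>k\<in>{1..<s}. (q choose k) * ((n - 1) choose (k - 1)))"
    using n_subsets[of "{..<q}"] by (simp add: Sub_def)
  finally show ?thesis .
qed

definition support_count :: "nat \<Rightarrow> nat \<Rightarrow> nat \<Rightarrow> real" where
  "support_count q n k = real (q choose k) * real ((n - 1) choose (k - 1))"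

lemma support_count_nonneg: "support_count q n k \<ge> 0"
  unfolding support_count_def by simp

lemma choose_Suc_mult: "(q choose Suc k) * Suc k = (q choose k) * (q - k)"
  using binomial_absorption[of k q] binomial_absorb_comp[of q k] by (simp add: mult.commute)

lemma support_count_Suc:
  assumes "k \<ge> 1"
  shows "support_count q n (Suc k) * (real (Suc k) * real k)
           = support_count q n k * (real (q - k) * real (n - k))"
proof -
  have q: "real (q choose Suc k) * real (Suc k) = real (q choose k) * real (q - k)"
    using choose_Suc_mult[of q k] by (metis of_nat_mult)
  have "((n - 1) choose Suc (k - 1)) * Suc (k - 1) = ((n - 1) choose (k - 1)) * (n - 1 - (k - 1))"
    by (rule choose_Suc_mult)
  moreover have "Suc (k - 1) = k" "n - 1 - (k - 1) = n - k" using assms by auto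
  ultimately have n: "real ((n - 1) choose k) * real k = real ((n - 1) choose (k - 1)) * real (n - k)"
    by (metis of_nat_mult)
  have "support_count q n (Suc k) * (real (Suc k) * real k)
      = (real (q choose Suc k) * real (Suc k)) * (real ((n - 1) choose k) * real k)"
    unfolding support_count_def by simp
  also have "\<dots> = support_count q n k * (real (q - k) * real (n - k))"
    unfolding q n support_count_def by simp
  finally show ?thesis .
qed

lemma support_count_le_binomial:
  assumes "1 \<le> k" "k \<le> n"
  shows "support_count q n k \<le> real ((n + q - 1) choose n)"
proof -
  have "(q choose k) * ((n - 1) choose (n - k)) \<le> (\<Sum>i\<le>n. (q choose i) * ((n - 1) choose (n - i)))"
    by (rule member_le_sum) (use assms in auto)
  also have "\<dots> = (q + (n - 1)) choose n" by (rule vandermonde)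
  also have "q + (n - 1) = n + q - 1" using assms by simp
  finally have "(q choose k) * ((n - 1) choose (k - 1)) \<le> (n + q - 1) choose n"
    using binomial_symmetric[of "k - 1" "n - 1"] assms by simp
  thus ?thesis unfolding support_count_def by (metis of_nat_le_iff of_nat_mult)
qed

text \<open>The key identity is \<open>(q - a m)(n - a m) = (1 - a) n q + (a m)\<^sup>2\<close> for \<open>m = nq/(n+q)\<close>.\<close>

lemma consecutive_ratio_bound:
  fixes a m n q k :: real
  assumes a: "0 < a" "a < 1" and nq: "n > 0" "q > 0" and m: "m = n * q / (n + q)"
    and k: "0 \<le> k" "k + 1 \<le> a * m"
  shows "(2 - a) * (k * (k + 1)) \<le> (q - k) * (n - k)"
proof -
  have m_pos: "m > 0" and m_le: "m \<le> q" "m \<le> n"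
    using nq unfolding m by (auto simp: field_simps)
  have "m * m \<le> n * q"
    using m_le nq mult_mono[OF m_le(1) m_le(2)] by (smt (verit) m_pos mult.commute)
  have am: "a * m \<le> m" using a m_pos by simp
  have "(2 - a) * (k * (k + 1)) \<le> (2 - a) * ((a * m) * (a * m))"
    using k a by (intro mult_left_mono mult_mono) auto
  also have "\<dots> \<le> (1 - a) * (n * q) + (a * m) * (a * m)"
  proof -
    have "(a * m) * (a * m) \<le> n * q"
      using \<open>m * m \<le> n * q\<close> am m_pos a by (smt (verit) mult_mono mult_nonneg_nonneg)
    hence "(1 - a) * ((a * m) * (a * m)) \<le> (1 - a) * (n * q)"
      using a by (intro mult_left_mono) auto
    thus ?thesis by (simp add: algebra_simps)
  qed
  also have "\<dots> = (q - a * m) * (n - a * m)"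
  proof -
    have "a * m * (n + q) = a * (n * q)" unfolding m using nq by (simp add: field_simps)
    thus ?thesis by (simp add: algebra_simps)
  qed
  also have "\<dots> \<le> (q - k) * (n - k)"
    using k am m_le by (intro mult_mono) auto
  finally show ?thesis .
qed

lemma support_count_Suc_ge:
  fixes \<epsilon> m :: real and n q k :: nat
  assumes "n \<ge> 1" "q \<ge> 1" "0 < \<epsilon>" "\<epsilon> < 1" and m: "m = real n * real q / (real n + real q)"
    and k: "1 \<le> k" "real k + 1 \<le> (1 - \<epsilon>) * m"
  shows "(1 + \<epsilon>) * support_count q n k \<le> support_count q n (Suc k)"
proof -
  have "m \<le> real q" "m \<le> real n" "m \<ge> 0" using assms unfolding m by (auto simp: field_simps)
  hence "(1 - \<epsilon>) * m \<le> m"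
    using mult_nonneg_nonneg[OF less_imp_le[OF assms(3)] \<open>m \<ge> 0\<close>] by (simp add: algebra_simps)
  hence "real (q - k) = real q - real k" "real (n - k) = real n - real k"
    using k \<open>m \<le> real q\<close> \<open>m \<le> real n\<close> by auto
  moreover have "(2 - (1 - \<epsilon>)) * (real k * (real k + 1)) \<le> (real q - real k) * (real n - real k)"
    by (rule consecutive_ratio_bound[OF _ _ _ _ m]) (use assms in auto)
  hence "support_count q n k * ((2 - (1 - \<epsilon>)) * (real k * (real k + 1)))
      \<le> support_count q n k * ((real q - real k) * (real n - real k))"
    by (rule mult_left_mono[OF _ support_count_nonneg])
  ultimately have "(1 + \<epsilon>) * support_count q n k * (real (Suc k) * real k)
      \<le> support_count q n (Suc k) * (real (Suc k) * real k)"
    using support_count_Suc[OF k(1), of q n] by (simp add: algebra_simps)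
  moreover have "real (Suc k) * real k > 0" using k by simp
  ultimately show ?thesis by (rule mult_right_le_imp_le)
qed

lemma sum_power_diff_le:
  fixes r :: real
  assumes "0 < r" "r < 1" "s \<le> s0"
  shows "(\<Sum>k<s. r ^ (s0 - k)) \<le> r ^ (s0 - s) * (r / (1 - r))"
  using assms(3)
proof (induction s)
  case (Suc s)
  have "(\<Sum>k<Suc s. r ^ (s0 - k)) \<le> r ^ (s0 - s) * (r / (1 - r)) + r ^ (s0 - s)"
    using Suc by simp
  also have "\<dots> = r ^ (s0 - s) / (1 - r)" using assms by (simp add: field_simps)
  also have "r ^ (s0 - s) = r ^ (s0 - Suc s) * r"
    using Suc.prems by (metis Suc_diff_le Suc_le_lessD power_Suc2 diff_Suc_Suc)
  finally show ?case by (simp add: field_simps)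
qed (use assms in simp)

lemma sum_le_geometric_tail:
  fixes T :: "nat \<Rightarrow> real" and R :: real
  assumes R: "R > 1" and step: "\<And>k. 1 \<le> k \<Longrightarrow> k < s0 \<Longrightarrow> R * T k \<le> T (Suc k)"
    and nonneg: "\<And>k. T k \<ge> 0" and "s \<le> s0"
  shows "(\<Sum>k\<in>{1..<s}. T k) \<le> T s0 / ((R - 1) * R ^ (s0 - s))"
proof -
  define r where "r = 1 / R"
  have r: "0 < r" "r < 1" using R unfolding r_def by auto
  have below: "T k \<le> T s0 * r ^ (s0 - k)" if "1 \<le> k" "k \<le> s0" for k
    using that(2,1)
  proof (induction k rule: inc_induct)
    case (step k)
    have "R * T k \<le> T s0 * r ^ (s0 - Suc k)"
      using assms(2)[of k] step.IH step.hyps(2) step.prems by fastforce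
    moreover have "r ^ (s0 - k) = r ^ (s0 - Suc k) * r"
      using step.hyps(2) by (metis Suc_diff_Suc power_Suc2)
    ultimately show ?case using R unfolding r_def by (simp add: field_simps)
  qed simp
  have "(\<Sum>k\<in>{1..<s}. T k) \<le> (\<Sum>k\<in>{1..<s}. T s0 * r ^ (s0 - k))"
    by (rule sum_mono) (use below assms(4) in auto)
  also have "\<dots> \<le> (\<Sum>k<s. T s0 * r ^ (s0 - k))"
    by (rule sum_mono2) (use nonneg r in auto)
  also have "\<dots> \<le> T s0 * (r ^ (s0 - s) * (r / (1 - r)))"
    unfolding sum_distrib_left[symmetric]
    by (rule mult_left_mono[OF sum_power_diff_le[OF r assms(4)] nonneg])
  also have "\<dots> = T s0 / ((R - 1) * R ^ (s0 - s))"
    using R unfolding r_def by (simp add: field_simps power_one_over)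
  finally show ?thesis .
qed

lemma Mq_le_small_support_bound:
  fixes \<epsilon> m :: real and n q s s0 :: nat
  assumes "n \<ge> 1" "q \<ge> 1" "0 < \<epsilon>" "\<epsilon> < 1" and m: "m = real n * real q / (real n + real q)"
    and s0: "real s0 \<le> (1 - \<epsilon>) * m" and s: "1 \<le> s" "s \<le> s0"
  shows "real (Mq q n 1) \<le> real (card (disc_simplex q n)) / (\<epsilon> * (1 + \<epsilon>) ^ (s0 - s))
                            + real (card (disc_simplex q (n - 1))) / real s"
proof -
  obtain S where S: "S \<subseteq> disc_simplex q n" "separated q 1 S" "card S = Mq q n 1"
    by (rule Mq_attained)
  have "m \<le> real n" "m \<ge> 0" using assms unfolding m by (auto simp: field_simps)
  hence "(1 - \<epsilon>) * m \<le> real n"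
    using mult_nonneg_nonneg[OF less_imp_le[OF assms(3)] \<open>m \<ge> 0\<close>] by (simp add: algebra_simps)
  hence "s0 \<le> n" using s0 by linarith
  have ratio: "(1 + \<epsilon>) * support_count q n k \<le> support_count q n (Suc k)"
    if "1 \<le> k" "k < s0" for k
    by (rule support_count_Suc_ge[OF assms(1-4) m]) (use that s0 in auto)
  have "real (card S) \<le> real (card {x \<in> disc_simplex q n. card (support q x) < s})
                         + real (card (disc_simplex q (n - 1))) / real s"
    by (rule card_code_le[OF s(1) S(1,2)])
  also have "real (card {x \<in> disc_simplex q n. card (support q x) < s})
      \<le> real (\<Sum>k\<in>{1..<s}. (q choose k) * ((n - 1) choose (k - 1)))"
    by (simp only: of_nat_le_iff card_small_support_le[OF assms(1)])
  also have "\<dots> = (\<Sum>k\<in>{1..<s}. support_count q n k)"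
    unfolding support_count_def by simp
  also have "\<dots> \<le> support_count q n s0 / ((1 + \<epsilon> - 1) * (1 + \<epsilon>) ^ (s0 - s))"
    by (rule sum_le_geometric_tail[where T = "support_count q n", OF _ ratio support_count_nonneg s(2)])
       (use assms in auto)
  also have "\<dots> \<le> real (card (disc_simplex q n)) / (\<epsilon> * (1 + \<epsilon>) ^ (s0 - s))"
  proof -
    have "support_count q n s0 \<le> real (card (disc_simplex q n))"
      using support_count_le_binomial[of s0 n q] s \<open>s0 \<le> n\<close> by (simp add: card_disc_simplex)
    moreover have "\<epsilon> * (1 + \<epsilon>) ^ (s0 - s) \<ge> 0" using assms(3) by simp
    ultimately show ?thesis by (simp add: divide_right_mono)
  qed
  finally show ?thesis using S(3) by simp
qed

section \<open>Comparing \<open>M\<^sub>q(n,1)\<close> with \<open>V/q\<close>\<close>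

lemma real_nat_floor_bounds: "x \<ge> 0 \<Longrightarrow> real (nat \<lfloor>x\<rfloor>) \<le> x \<and> x - 1 < real (nat \<lfloor>x\<rfloor>)"
  by linarith

lemma real_nat_ceiling_bounds: "x \<ge> 0 \<Longrightarrow> x \<le> real (nat \<lceil>x\<rceil>) \<and> real (nat \<lceil>x\<rceil>) < x + 1"
  by linarith

lemma obtain_support_thresholds:
  fixes \<epsilon> m :: real
  assumes "0 < \<epsilon>" "\<epsilon> \<le> 1/4" "\<epsilon> * m \<ge> 2"
  obtains s s0 :: nat where "1 \<le> s" "s \<le> s0" "(1 - 2*\<epsilon>) * m \<le> real s" "real s0 \<le> (1 - \<epsilon>) * m"
    "\<epsilon> * m - 2 \<le> real (s0 - s)"
proof -
  have "m > 0" using zero_less_mult_pos[of \<epsilon> m] assms by linarith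
  hence pos: "(1 - 2*\<epsilon>) * m > 0" "(1 - \<epsilon>) * m > 0" using assms by auto
  define s where "s = nat \<lceil>(1 - 2*\<epsilon>) * m\<rceil>"
  define s0 where "s0 = nat \<lfloor>(1 - \<epsilon>) * m\<rfloor>"
  have s: "(1 - 2*\<epsilon>) * m \<le> real s" "real s < (1 - 2*\<epsilon>) * m + 1"
    unfolding s_def using real_nat_ceiling_bounds[of "(1 - 2*\<epsilon>) * m"] pos by auto
  have s0: "real s0 \<le> (1 - \<epsilon>) * m" "(1 - \<epsilon>) * m - 1 < real s0"
    unfolding s0_def using real_nat_floor_bounds[of "(1 - \<epsilon>) * m"] pos by auto
  have "s \<le> s0" using s s0 assms(3) by (simp add: algebra_simps)
  moreover have "1 \<le> s" using s pos by simp
  moreover have "\<epsilon> * m - 2 \<le> real (s0 - s)" using s s0 \<open>s \<le> s0\<close> by (simp add: algebra_simps)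
  ultimately show ?thesis using that s(1) s0(1) by blast
qed

lemma small_support_term_le:
  fixes \<epsilon> c qt :: real and d n q :: nat
  assumes "\<epsilon> > 0" "real d \<ge> \<epsilon> * c * real n - 2" "real q \<le> qt * real n"
  shows "real q / (\<epsilon> * (1 + \<epsilon>) ^ d)
           \<le> qt * (1 + \<epsilon>)^2 / \<epsilon> * (real n / ((1 + \<epsilon>) powr (\<epsilon> * c)) ^ n)"
proof -
  define b where "b = (1 + \<epsilon>) powr (\<epsilon> * c)"
  have b: "b > 0" unfolding b_def using assms(1) by simp
  have "b ^ n = (1 + \<epsilon>) powr (\<epsilon> * c * real n)"
    using b unfolding b_def by (simp add: powr_realpow[symmetric] powr_powr)
  also have "\<dots> = (1 + \<epsilon>) powr (\<epsilon> * c * real n - 2) * (1 + \<epsilon>) powr 2"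
    by (simp add: powr_diff)
  also have "(1 + \<epsilon>) powr (\<epsilon> * c * real n - 2) \<le> (1 + \<epsilon>) powr real d"
    using assms by (intro powr_mono) auto
  also have "(1 + \<epsilon>) powr real d = (1 + \<epsilon>) ^ d" using assms(1) by (simp add: powr_realpow)
  also have "(1 + \<epsilon>) powr (2::real) = (1 + \<epsilon>)^2" using assms(1) by (simp add: powr_realpow)
  finally have "b ^ n / (1 + \<epsilon>)^2 \<le> (1 + \<epsilon>) ^ d"
    using assms(1) by (simp add: divide_le_eq)
  moreover have "b ^ n > 0" using b by simp
  ultimately have "real q / (\<epsilon> * (1 + \<epsilon>) ^ d) \<le> qt * real n / (\<epsilon> * (b ^ n / (1 + \<epsilon>)^2))"
    using assms by (intro frac_le mult_left_mono) auto
  thus ?thesis using assms(1) \<open>b ^ n > 0\<close> unfolding b_def[symmetric] by (simp add: field_simps)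
qed

lemma card_disc_simplex_ratio:
  assumes "n \<ge> 1" "q \<ge> 1"
  shows "real (card (disc_simplex q (n - 1))) / real (card (disc_simplex q n))
           = real n / (real n + real q - 1)"
proof -
  have "n * ((n + q - 1) choose n) = (n + q - 1) * ((n + q - 1 - 1) choose (n - 1))"
    using times_binomial_minus1_eq[of n "n + q - 1"] assms by simp
  hence "real n * real ((n + q - 1) choose n) = real (n + q - 1) * real ((n + q - 1 - 1) choose (n - 1))"
    by (metis of_nat_mult)
  moreover have "real (n + q - 1) = real n + real q - 1" "n - 1 + q - 1 = n + q - 1 - 1"
    using assms by auto
  moreover have "(n + q - 1) choose n > 0" using assms by simp
  ultimately show ?thesis using assms by (simp add: card_disc_simplex field_simps)
qed

lemma large_support_term_le:
  fixes \<epsilon> :: real and n q s :: nat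
  assumes "n \<ge> 1" "q \<ge> 1" "\<epsilon> < 1/2" "(1 - 2*\<epsilon>) * (real n * real q / (real n + real q)) \<le> real s"
  shows "real q * (real (card (disc_simplex q (n - 1))) / real (card (disc_simplex q n))) / real s
           \<le> (1 + 1 / real n) / (1 - 2 * \<epsilon>)"
proof -
  define D where "D = real n + real q - 1"
  define c where "c = 1 - 2 * \<epsilon>"
  have pos: "D > 0" "c > 0" "c * (real n * real q / (real n + real q)) > 0"
    using assms unfolding D_def c_def by auto
  hence "real s > 0" using assms(4) unfolding c_def by linarith
  have "real q * (real n / D) / real s
      \<le> real q * (real n / D) / (c * (real n * real q / (real n + real q)))"
    using assms pos \<open>real s > 0\<close> unfolding c_def by (intro divide_left_mono mult_pos_pos) auto
  also have "\<dots> = (real n + real q) / D / c"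
    using assms pos by (simp add: field_simps)
  also have "\<dots> \<le> (1 + 1 / real n) / c"
    using assms pos unfolding D_def by (intro divide_right_mono) (auto simp: field_simps)
  finally show ?thesis unfolding card_disc_simplex_ratio[OF assms(1,2)] D_def c_def .
qed

lemma Mq_div_volume_le:
  fixes qt \<epsilon> :: real and n q :: nat
  assumes qt: "qt > 0" and \<epsilon>: "0 < \<epsilon>" "\<epsilon> \<le> 1/4" and q: "q = nat \<lfloor>qt * real n\<rfloor>"
    and large: "qt * real n \<ge> 2" "\<epsilon> * (qt / (2 + qt)) * real n \<ge> 2" and n: "n \<ge> 1"
  shows "real (Mq q n 1) / (real (card (disc_simplex q n)) / real q)
     \<le> qt * (1 + \<epsilon>)^2 / \<epsilon> * (real n / ((1 + \<epsilon>) powr (\<epsilon> * (qt / (2 + qt)))) ^ n)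
        + (1 + 1 / real n) / (1 - 2 * \<epsilon>)"
proof -
  define m where "m = real n * real q / (real n + real q)"
  have q_le: "real q \<le> qt * real n" and "qt * real n - 1 < real q"
    unfolding q using real_nat_floor_bounds[of "qt * real n"] qt by auto
  hence q_ge: "qt * real n \<le> 2 * real q" using large(1) by linarith
  hence q1: "q \<ge> 1" using large(1) by linarith
  define c where "c = qt / (2 + qt)"
  have "c * (real n + real q) \<le> real q"
    using qt q_ge unfolding c_def by (simp add: field_simps)
  hence "real n * (c * (real n + real q)) \<le> real n * real q" by (intro mult_left_mono) auto
  hence "c * real n * (real n + real q) \<le> real n * real q" by (simp add: algebra_simps)
  hence m_ge: "c * real n \<le> m"
    unfolding m_def using n q1 by (simp add: field_simps)
  hence "\<epsilon> * (c * real n) \<le> \<epsilon> * m" using \<epsilon> by (intro mult_left_mono) auto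
  hence eps_m: "\<epsilon> * m \<ge> \<epsilon> * (qt / (2 + qt)) * real n" unfolding c_def by (simp add: mult.assoc)
  hence "\<epsilon> * m \<ge> 2" using large(2) by linarith
  then obtain s s0 :: nat where s: "1 \<le> s" "s \<le> s0" "(1 - 2*\<epsilon>) * m \<le> real s"
    "real s0 \<le> (1 - \<epsilon>) * m" "\<epsilon> * m - 2 \<le> real (s0 - s)"
    by (rule obtain_support_thresholds[OF \<epsilon>])
  define V where "V k = real (card (disc_simplex q k))" for k
  have V_pos: "V n > 0" unfolding V_def using card_disc_simplex_pos[OF q1] by simp
  have "real (Mq q n 1) \<le> V n / (\<epsilon> * (1 + \<epsilon>) ^ (s0 - s)) + V (n - 1) / real s"
    unfolding V_def by (rule Mq_le_small_support_bound[OF n q1 \<epsilon>(1) _ m_def s(4,1,2)]) (use \<epsilon> in simp)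
  hence "real (Mq q n 1) * real q / V n
      \<le> (V n / (\<epsilon> * (1 + \<epsilon>) ^ (s0 - s)) + V (n - 1) / real s) * real q / V n"
    using V_pos by (intro divide_right_mono mult_right_mono) auto
  hence "real (Mq q n 1) / (V n / real q)
      \<le> real q / (\<epsilon> * (1 + \<epsilon>) ^ (s0 - s)) + real q * (V (n - 1) / V n) / real s"
    using V_pos by (simp add: field_simps)
  also have "real q / (\<epsilon> * (1 + \<epsilon>) ^ (s0 - s))
      \<le> qt * (1 + \<epsilon>)^2 / \<epsilon> * (real n / ((1 + \<epsilon>) powr (\<epsilon> * (qt / (2 + qt)))) ^ n)"
    by (rule small_support_term_le[OF \<epsilon>(1) _ q_le]) (use s(5) eps_m in linarith)
  also have "real q * (V (n - 1) / V n) / real s \<le> (1 + 1 / real n) / (1 - 2 * \<epsilon>)"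
    unfolding V_def by (rule large_support_term_le[OF n q1 _ s(3)[unfolded m_def]]) (use \<epsilon> in simp)
  finally show ?thesis unfolding V_def by simp
qed

lemma eventually_mult_real_ge:
  assumes "c > 0"
  shows "eventually (\<lambda>n::nat. c * real n \<ge> C) sequentially"
  using eventually_ge_at_top[of "nat \<lceil>C / c\<rceil>"]
proof eventually_elim
  case (elim n)
  hence "real n \<ge> C / c" by linarith
  thus ?case using assms by (simp add: field_simps)
qed

lemma eventually_nat_floor_mult_ge_1:
  assumes "qt > 0"
  shows "eventually (\<lambda>n. nat \<lfloor>qt * real n\<rfloor> \<ge> 1) sequentially"
  using eventually_mult_real_ge[OF assms, of 1] by eventually_elim linarith

lemma eventually_Mq_div_volume_less:
  fixes qt a :: real
  assumes qt: "qt > 0" and a: "a > 1"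
  shows "eventually (\<lambda>n. real (Mq (nat \<lfloor>qt * real n\<rfloor>) n 1)
            / (real (card (disc_simplex (nat \<lfloor>qt * real n\<rfloor>) n)) / real (nat \<lfloor>qt * real n\<rfloor>)) < a)
           sequentially"
proof -
  define \<epsilon> where "\<epsilon> = min (1/4) ((a - 1) / 8)"
  have \<epsilon>: "0 < \<epsilon>" "\<epsilon> \<le> 1/4" "\<epsilon> \<le> (a - 1) / 8" using a unfolding \<epsilon>_def by (auto simp: min_def)
  define b where "b = (1 + \<epsilon>) powr (\<epsilon> * (qt / (2 + qt)))"
  have "b > 1" unfolding b_def using \<epsilon> qt by simp
  define U where "U n = qt * (1 + \<epsilon>)^2 / \<epsilon> * (real n / b ^ n) + (1 + 1 / real n) / (1 - 2 * \<epsilon>)"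
    for n :: nat
  have "U \<longlonglongrightarrow> qt * (1 + \<epsilon>)^2 / \<epsilon> * 0 + (1 + 0) / (1 - 2 * \<epsilon>)"
    unfolding U_def using \<open>b > 1\<close> \<epsilon>
    by (intro tendsto_intros lim_n_over_pown lim_1_over_n) auto
  moreover have "1 / (1 - 2 * \<epsilon>) < a"
  proof -
    have "1 \<le> (1 + 4 * \<epsilon>) * (1 - 2 * \<epsilon>)" using \<epsilon> by (simp add: algebra_simps power2_eq_square)
    hence "1 / (1 - 2 * \<epsilon>) \<le> 1 + 4 * \<epsilon>" using \<epsilon> by (simp add: divide_le_eq)
    moreover have "8 * \<epsilon> \<le> a - 1" using \<epsilon>(3) by simp
    ultimately show ?thesis using \<epsilon> a by linarith
  qed
  ultimately have "eventually (\<lambda>n. U n < a) sequentially" by (simp add: order_tendstoD(2))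
  moreover have "eventually (\<lambda>n. qt * real n \<ge> 2) sequentially"
    by (rule eventually_mult_real_ge[OF qt])
  moreover have "eventually (\<lambda>n. \<epsilon> * (qt / (2 + qt)) * real n \<ge> 2) sequentially"
    by (rule eventually_mult_real_ge) (use \<epsilon> qt in simp)
  ultimately show ?thesis using eventually_ge_at_top[of 1]
  proof eventually_elim
    case (elim n)
    have "real (Mq (nat \<lfloor>qt * real n\<rfloor>) n 1)
         / (real (card (disc_simplex (nat \<lfloor>qt * real n\<rfloor>) n)) / real (nat \<lfloor>qt * real n\<rfloor>)) \<le> U n"
      unfolding U_def b_def using Mq_div_volume_le[OF qt \<epsilon>(1,2) refl] elim by simp
    thus ?case using elim(1) by simp
  qed
qed

theorem Mq_div_volume_tendsto:
  fixes qt :: real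
  assumes qt: "qt > 0"
  shows "(\<lambda>n. real (Mq (nat \<lfloor>qt * real n\<rfloor>) n 1)
            / (real (card (disc_simplex (nat \<lfloor>qt * real n\<rfloor>) n)) / real (nat \<lfloor>qt * real n\<rfloor>)))
         \<longlonglongrightarrow> 1"
proof (rule order_tendstoI)
  fix a :: real assume "a < 1"
  show "eventually (\<lambda>n. a < real (Mq (nat \<lfloor>qt * real n\<rfloor>) n 1)
            / (real (card (disc_simplex (nat \<lfloor>qt * real n\<rfloor>) n)) / real (nat \<lfloor>qt * real n\<rfloor>)))
          sequentially"
    using eventually_nat_floor_mult_ge_1[OF qt]
  proof eventually_elim
    case (elim n)
    have "1 \<le> real (Mq (nat \<lfloor>qt * real n\<rfloor>) n 1)
               / (real (card (disc_simplex (nat \<lfloor>qt * real n\<rfloor>) n)) / real (nat \<lfloor>qt * real n\<rfloor>))"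
      unfolding le_divide_eq_1_pos[OF volume_div_pos[OF elim]] by (rule card_disc_simplex_div_le_Mq[OF elim])
    with \<open>a < 1\<close> show ?case by (rule less_le_trans)
  qed
qed (rule eventually_Mq_div_volume_less[OF qt])

section \<open>Asymptotics of the simplex volume\<close>

text \<open>\<open>g\<^sub>n(x) = (n+x) ln(n+x) - x ln x\<close> is the leading part of \<open>ln C(n+x, n)\<close>; its derivative is
  \<open>ln(1 + n/x)\<close>, which links the rounding \<open>q = \<lfloor>qt n\<rfloor>\<close> to the factor \<open>(1 + 1/qt)\<^sup>\<rho>\<^sup>(\<^sup>n\<^sup>)\<close>.\<close>

definition binomial_potential :: "real \<Rightarrow> real \<Rightarrow> real" where
  "binomial_potential n x = (n + x) * ln (n + x) - x * ln x"

lemma binomial_potential_deriv: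
  "n > 0 \<Longrightarrow> x > 0 \<Longrightarrow> (binomial_potential n has_real_derivative ln (n + x) - ln x) (at x)"
  unfolding binomial_potential_def by (rule derivative_eq_intros refl | simp)+

lemma ln_one_plus_div_antimono:
  fixes n x y :: real
  assumes "0 < n" "0 < x" "x \<le> y"
  shows "ln (1 + n / y) \<le> ln (1 + n / x)"
proof -
  have "n / y \<le> n / x" using assms by (intro divide_left_mono) auto
  moreover have "n / y \<ge> 0" using assms by simp
  ultimately show ?thesis by (intro ln_mono) auto
qed

lemma binomial_potential_linearization:
  fixes n a b :: real
  assumes n: "n > 0" and b: "b > 1" and ab: "b - 1 \<le> a" "a \<le> b"
  shows "\<bar>binomial_potential n a - binomial_potential n b - (a - b) * ln (1 + n / b)\<bar>
           \<le> ln (1 + n / (b - 1)) - ln (1 + n / b)"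
proof (cases "a = b")
  case True
  thus ?thesis using ln_one_plus_div_antimono[of n "b - 1" b] n b by simp
next
  case False
  hence "a < b" using ab by simp
  moreover have "a > 0" using ab b by simp
  ultimately obtain z where z: "a < z" "z < b"
    and mvt: "binomial_potential n b - binomial_potential n a = (b - a) * (ln (n + z) - ln z)"
    using MVT2[of a b "binomial_potential n" "\<lambda>x. ln (n + x) - ln x"] binomial_potential_deriv[OF n]
    by force
  have "z > 0" using z \<open>a > 0\<close> by simp
  moreover have "1 + n / z = (n + z) / z" using \<open>z > 0\<close> by (simp add: field_simps)
  ultimately have "ln (n + z) - ln z = ln (1 + n / z)" using n by (simp add: ln_div)
  hence "binomial_potential n a - binomial_potential n b - (a - b) * ln (1 + n / b)
      = - ((b - a) * (ln (1 + n / z) - ln (1 + n / b)))"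
    using mvt by (simp add: algebra_simps)
  moreover have lower: "ln (1 + n / b) \<le> ln (1 + n / z)" and upper: "ln (1 + n / z) \<le> ln (1 + n / (b - 1))"
    using z ab n b \<open>z > 0\<close> by (auto intro!: ln_one_plus_div_antimono)
  ultimately have "\<bar>binomial_potential n a - binomial_potential n b - (a - b) * ln (1 + n / b)\<bar>
      = (b - a) * (ln (1 + n / z) - ln (1 + n / b))"
    using \<open>a < b\<close> by simp
  also have "\<dots> \<le> 1 * (ln (1 + n / (b - 1)) - ln (1 + n / b))"
    using ab \<open>a < b\<close> lower upper by (intro mult_mono) auto
  finally show ?thesis by simp
qed

lemma volume_div_eq_fact:
  assumes "n \<ge> 1" "q \<ge> 1"
  shows "real (card (disc_simplex q n)) / real q = fact (n + q) / (fact n * fact q * real (n + q))"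
proof -
  have "real ((n + q - 1) choose n) = fact (n + q - 1) / (fact n * fact (n + q - 1 - n))"
    by (rule binomial_fact) (use assms in simp)
  also have "n + q - 1 - n = q - 1" by simp
  finally have binom: "real ((n + q - 1) choose n) = fact (n + q - 1) / (fact n * fact (q - 1))" .
  have fact_Suc: "(fact (n + q) :: real) = real (n + q) * fact (n + q - 1)"
    "(fact q :: real) = real q * fact (q - 1)"
    using assms by (simp_all add: fact_reduce)
  have "F / (A * B) / Q = (N * F) / (A * (Q * B) * N)"
    if "N > 0" "Q > 0" "A > 0" "B > 0" for N Q A B F :: real
    using that by (simp add: field_simps)
  thus ?thesis unfolding card_disc_simplex binom fact_Suc using assms by simp
qed

lemma ln_volume_div_eq:
  assumes "n \<ge> 1" "q \<ge> 1"
  shows "ln (real (card (disc_simplex q n)) / real q)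
    = stirling_remainder (n + q) - stirling_remainder n - stirling_remainder q
      + (real n + real q + 1/2) * ln (real n + real q) - (real n + 1/2) * ln (real n)
      - (real q + 1/2) * ln (real q) - ln (real n + real q)"
  using assms ln_fact_eq_stirling[of "n + q"] ln_fact_eq_stirling[of n] ln_fact_eq_stirling[of q]
  unfolding volume_div_eq_fact[OF assms] by (simp add: ln_div ln_mult)

lemma bin_entropy_conv_ln:
  assumes qt: "qt > 0"
  shows "(1 + qt) * bin_entropy (1 / (1 + qt)) * ln 2 = (1 + qt) * ln (1 + qt) - qt * ln qt"
proof -
  have "bin_entropy p * ln 2 = - p * ln p - (1 - p) * ln (1 - p)" for p
    unfolding bin_entropy_def log_def by (simp add: field_simps)
  moreover have "1 - 1 / (1 + qt) = qt / (1 + qt)" using qt by (simp add: field_simps)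
  ultimately have "bin_entropy (1 / (1 + qt)) * ln 2
      = - (1 / (1 + qt)) * ln (1 / (1 + qt)) - (qt / (1 + qt)) * ln (qt / (1 + qt))"
    by simp
  also have "\<dots> = (ln (1 + qt) - qt * ln qt + qt * ln (1 + qt)) / (1 + qt)"
  proof -
    have "ln (1 / (1 + qt)) = - ln (1 + qt)" "ln (qt / (1 + qt)) = ln qt - ln (1 + qt)"
      using qt by (simp_all add: ln_div)
    moreover have "- (1 / d) * (- A) - (qt / d) * (B - A) = (A - qt * B + qt * A) / d"
      if "d \<noteq> 0" for d A B :: real
      using that by (simp add: field_simps)
    ultimately show ?thesis using qt by simp
  qed
  finally have "(1 + qt) * (bin_entropy (1 / (1 + qt)) * ln 2)
      = ln (1 + qt) - qt * ln qt + qt * ln (1 + qt)"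
    using qt by (simp add: field_simps)
  thus ?thesis by (simp add: algebra_simps)
qed

lemma ln_main_term_eq:
  assumes qt: "qt > 0" and n: "n \<ge> 1"
  shows "ln (2 powr (real n * (1 + qt) * bin_entropy (1 / (1 + qt)))
             / (sqrt (2 * pi) * real n powr (3/2)) * (1 / qt) * (1 + 1 / qt) powr (r - 1/2))
     = real n * ((1 + qt) * ln (1 + qt) - qt * ln qt) - ln (2 * pi) / 2 - 3/2 * ln (real n)
       - ln qt + (r - 1/2) * ln (1 + 1 / qt)"
proof -
  have "real n * (1 + qt) * bin_entropy (1 / (1 + qt)) * ln 2
      = real n * ((1 + qt) * ln (1 + qt) - qt * ln qt)"
    using bin_entropy_conv_ln[OF qt] by (simp add: mult.assoc)
  moreover have "1 + 1 / qt > 0" using qt by (simp add: add_pos_pos)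
  ultimately show ?thesis
    using qt n by (simp add: ln_mult ln_div ln_sqrt)
qed

lemma ln_volume_div_minus_ln_main_term:
  fixes qt :: real and n q :: nat
  assumes qt: "qt > 0" and n: "n \<ge> 1" and q: "q \<ge> 1"
  shows "ln (real (card (disc_simplex q n)) / real q) -
     ln (2 powr (real n * (1 + qt) * bin_entropy (1 / (1 + qt)))
        / (sqrt (2 * pi) * real n powr (3/2)) * (1 / qt)
        * (1 + 1 / qt) powr ((real q - qt * real n) - 1/2))
   = (stirling_remainder (n + q) - stirling_remainder n - stirling_remainder q + ln (2 * pi) / 2)
   + (binomial_potential (real n) (real q) - binomial_potential (real n) (qt * real n)
      - (real q - qt * real n) * ln (1 + real n / (qt * real n)))
   + (- (1/2) * ln ((real n + real q) / real n) - (1/2) * ln (real q / real n)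
      + ln qt + (1/2) * ln (1 + 1 / qt))"
proof -
  have np: "real n > 0" and "real q > 0" using n q by auto
  have "real n + qt * real n = real n * (1 + qt)" by (simp add: algebra_simps)
  hence "ln (real n + qt * real n) = ln (real n) + ln (1 + qt)" using np qt by (simp add: ln_mult)
  moreover have "ln (qt * real n) = ln qt + ln (real n)" using np qt by (simp add: ln_mult)
  moreover have "real n / (qt * real n) = 1 / qt" using np by simp
  moreover have "ln ((real n + real q) / real n) = ln (real n + real q) - ln (real n)"
    "ln (real q / real n) = ln (real q) - ln (real n)"
    using np \<open>real q > 0\<close> by (simp_all add: ln_div)
  ultimately show ?thesis
    unfolding ln_volume_div_eq[OF n q] ln_main_term_eq[OF qt n] binomial_potential_def
    by (simp add: algebra_simps)
qed

lemma stirling_remainder_combination_tendsto: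
  assumes "filterlim q at_top sequentially"
  shows "(\<lambda>n. stirling_remainder (n + q n) - stirling_remainder n - stirling_remainder (q n)
              + ln (2 * pi) / 2) \<longlonglongrightarrow> 0"
proof -
  have "filterlim (\<lambda>n. n + q n) at_top sequentially"
    unfolding filterlim_at_top
  proof
    fix Z :: nat
    show "eventually (\<lambda>n. Z \<le> n + q n) sequentially"
      using eventually_ge_at_top[of Z] by eventually_elim simp
  qed
  hence "(\<lambda>n. stirling_remainder (n + q n)) \<longlonglongrightarrow> ln (2 * pi) / 2"
    "(\<lambda>n. stirling_remainder (q n)) \<longlonglongrightarrow> ln (2 * pi) / 2"
    using filterlim_compose[OF stirling_remainder_tendsto] assms by auto
  hence "(\<lambda>n. stirling_remainder (n + q n) - stirling_remainder n - stirling_remainder (q n)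
              + ln (2 * pi) / 2) \<longlonglongrightarrow> ln (2*pi)/2 - ln (2*pi)/2 - ln (2*pi)/2 + ln (2*pi)/2"
    by (intro tendsto_intros stirling_remainder_tendsto)
  thus ?thesis by simp
qed

lemma real_nat_floor_mult_bounds:
  assumes "qt > 0"
  shows "real (nat \<lfloor>qt * real n\<rfloor>) = of_int \<lfloor>qt * real n\<rfloor>"
    "real (nat \<lfloor>qt * real n\<rfloor>) \<le> qt * real n" "qt * real n - 1 < real (nat \<lfloor>qt * real n\<rfloor>)"
  using assms by auto

lemma filterlim_nat_floor_mult:
  assumes "qt > 0"
  shows "filterlim (\<lambda>n. nat \<lfloor>qt * real n\<rfloor>) at_top sequentially"
  unfolding filterlim_at_top
proof
  fix Z :: nat
  show "eventually (\<lambda>n. Z \<le> nat \<lfloor>qt * real n\<rfloor>) sequentially"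
    using eventually_mult_real_ge[OF assms, of "real Z + 1"]
    by eventually_elim (use real_nat_floor_mult_bounds[OF assms] in \<open>smt (verit) of_nat_le_iff\<close>)
qed

lemma nat_floor_mult_div_tendsto:
  assumes qt: "qt > 0"
  shows "(\<lambda>n. real (nat \<lfloor>qt * real n\<rfloor>) / real n) \<longlonglongrightarrow> qt"
proof (rule tendsto_sandwich)
  show "eventually (\<lambda>n. qt - 1 / real n \<le> real (nat \<lfloor>qt * real n\<rfloor>) / real n) sequentially"
    using eventually_ge_at_top[of "1::nat"]
  proof eventually_elim
    case (elim n)
    hence "qt - 1 / real n = (qt * real n - 1) / real n" by (simp add: field_simps)
    also have "\<dots> \<le> real (nat \<lfloor>qt * real n\<rfloor>) / real n"
      using real_nat_floor_mult_bounds(3)[OF qt, of n] by (intro divide_right_mono) auto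
    finally show ?case .
  qed
  show "eventually (\<lambda>n. real (nat \<lfloor>qt * real n\<rfloor>) / real n \<le> qt) sequentially"
    using eventually_ge_at_top[of "1::nat"]
  proof eventually_elim
    case (elim n)
    thus ?case using real_nat_floor_mult_bounds(2)[OF qt, of n] by (simp add: divide_le_eq)
  qed
  show "(\<lambda>n. qt - 1 / real n) \<longlonglongrightarrow> qt"
    using tendsto_diff[OF tendsto_const lim_1_over_n, of qt] by simp
qed simp

lemma shape_term_tendsto:
  assumes qt: "qt > 0"
  defines "q \<equiv> \<lambda>n. nat \<lfloor>qt * real n\<rfloor>"
  shows "(\<lambda>n. - (1/2) * ln ((real n + real (q n)) / real n) - (1/2) * ln (real (q n) / real n)
              + ln qt + (1/2) * ln (1 + 1 / qt)) \<longlonglongrightarrow> 0"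
proof -
  have "eventually (\<lambda>n. 1 + real (q n) / real n = (real n + real (q n)) / real n) sequentially"
    using eventually_ge_at_top[of "1::nat"] by eventually_elim (simp add: field_simps)
  moreover have "(\<lambda>n. 1 + real (q n) / real n) \<longlonglongrightarrow> 1 + qt"
    unfolding q_def using nat_floor_mult_div_tendsto[OF qt] by (intro tendsto_intros)
  ultimately have "(\<lambda>n. (real n + real (q n)) / real n) \<longlonglongrightarrow> 1 + qt"
    by (rule Lim_transform_eventually[rotated])
  hence "(\<lambda>n. - (1/2) * ln ((real n + real (q n)) / real n) - (1/2) * ln (real (q n) / real n)
              + ln qt + (1/2) * ln (1 + 1 / qt))
         \<longlonglongrightarrow> - (1/2) * ln (1 + qt) - (1/2) * ln qt + ln qt + (1/2) * ln (1 + 1 / qt)"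
    unfolding q_def using qt nat_floor_mult_div_tendsto[OF qt] by (intro tendsto_intros) auto
  moreover have "1 + 1 / qt = (1 + qt) / qt" using qt by (simp add: field_simps)
  hence "ln (1 + 1 / qt) = ln (1 + qt) - ln qt" using qt by (simp add: ln_div)
  hence "- (1/2) * ln (1 + qt) - (1/2) * ln qt + ln qt + (1/2) * ln (1 + 1 / qt) = 0" by argo
  ultimately show ?thesis by simp
qed

text \<open>The rounding error \<open>q - qt n \<in> (-1, 0]\<close> enters linearly through the derivative of
  \<open>binomial_potential\<close>; the remainder is controlled by the variation of that derivative.\<close>

lemma rounding_term_tendsto:
  assumes qt: "qt > 0"
  defines "q \<equiv> \<lambda>n. nat \<lfloor>qt * real n\<rfloor>"
  shows "(\<lambda>n. binomial_potential (real n) (real (q n)) - binomial_potential (real n) (qt * real n)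
              - (real (q n) - qt * real n) * ln (1 + real n / (qt * real n))) \<longlonglongrightarrow> 0"
proof (rule Lim_null_comparison)
  have "(\<lambda>n. ln (1 + 1 / (qt - 1 / real n)) - ln (1 + 1 / qt))
          \<longlonglongrightarrow> ln (1 + 1 / (qt - 0)) - ln (1 + 1 / qt)"
    using qt add_pos_pos[of 1 "1 / qt"] by (intro tendsto_intros lim_1_over_n) auto
  moreover have "eventually (\<lambda>n. ln (1 + 1 / (qt - 1 / real n)) - ln (1 + 1 / qt)
      = ln (1 + real n / (qt * real n - 1)) - ln (1 + real n / (qt * real n))) sequentially"
    using eventually_ge_at_top[of "1::nat"]
    by eventually_elim (simp add: field_simps)
  ultimately show "(\<lambda>n. ln (1 + real n / (qt * real n - 1)) - ln (1 + real n / (qt * real n)))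
      \<longlonglongrightarrow> 0"
    by (simp add: Lim_transform_eventually)
  show "eventually (\<lambda>n. norm (binomial_potential (real n) (real (q n))
          - binomial_potential (real n) (qt * real n)
          - (real (q n) - qt * real n) * ln (1 + real n / (qt * real n)))
        \<le> ln (1 + real n / (qt * real n - 1)) - ln (1 + real n / (qt * real n))) sequentially"
    using eventually_ge_at_top[of "1::nat"] eventually_mult_real_ge[OF qt, of 2]
  proof eventually_elim
    case (elim n)
    show ?case unfolding real_norm_def q_def
      by (rule binomial_potential_linearization)
         (use elim real_nat_floor_mult_bounds[OF qt, of n] in auto)
  qed
qed

lemma ln_volume_div_minus_ln_main_term_tendsto:
  fixes qt :: real
  assumes qt: "qt > 0"
  shows "(\<lambda>n. ln (real (card (disc_simplex (nat \<lfloor>qt * real n\<rfloor>) n)) / real (nat \<lfloor>qt * real n\<rfloor>))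
            - ln (2 powr (real n * (1 + qt) * bin_entropy (1 / (1 + qt)))
                  / (sqrt (2 * pi) * real n powr (3/2)) * (1 / qt)
                  * (1 + 1 / qt) powr ((of_int \<lfloor>qt * real n\<rfloor> - qt * real n) - 1/2)))
         \<longlonglongrightarrow> 0"
    (is "(\<lambda>n. ln (?L n) - ln (?T n)) \<longlonglongrightarrow> 0")
proof -
  define q where "q n = nat \<lfloor>qt * real n\<rfloor>" for n
  have "(\<lambda>n. ln (?L n) - ln (?T n)) \<longlonglongrightarrow> 0 + 0 + 0"
  proof (rule Lim_transform_eventually[rotated])
    show "eventually (\<lambda>n.
        (stirling_remainder (n + q n) - stirling_remainder n - stirling_remainder (q n)
         + ln (2 * pi) / 2)
      + (binomial_potential (real n) (real (q n)) - binomial_potential (real n) (qt * real n)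
         - (real (q n) - qt * real n) * ln (1 + real n / (qt * real n)))
      + (- (1/2) * ln ((real n + real (q n)) / real n) - (1/2) * ln (real (q n) / real n)
         + ln qt + (1/2) * ln (1 + 1 / qt))
      = ln (?L n) - ln (?T n)) sequentially"
      using eventually_ge_at_top[of "1::nat"] eventually_nat_floor_mult_ge_1[OF qt]
    proof eventually_elim
      case (elim n)
      have "of_int \<lfloor>qt * real n\<rfloor> = real (q n)"
        using real_nat_floor_mult_bounds(1)[OF qt, of n] by (simp add: q_def)
      thus ?case
        using ln_volume_div_minus_ln_main_term[OF qt, of n "q n"] elim by (simp add: q_def)
    qed
  qed (unfold q_def, intro tendsto_add stirling_remainder_combination_tendsto
       filterlim_nat_floor_mult rounding_term_tendsto shape_term_tendsto qt)
  thus ?thesis by simp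
qed

theorem volume_div_tendsto:
  fixes qt :: real
  assumes qt: "qt > 0"
  shows "(\<lambda>n. (real (card (disc_simplex (nat \<lfloor>qt * real n\<rfloor>) n)) / real (nat \<lfloor>qt * real n\<rfloor>))
            / (2 powr (real n * (1 + qt) * bin_entropy (1 / (1 + qt)))
               / (sqrt (2 * pi) * real n powr (3/2)) * (1 / qt)
               * (1 + 1 / qt) powr ((of_int \<lfloor>qt * real n\<rfloor> - qt * real n) - 1/2)))
         \<longlonglongrightarrow> 1"
    (is "(\<lambda>n. ?L n / ?T n) \<longlonglongrightarrow> 1")
proof -
  have "(\<lambda>n. exp (ln (?L n) - ln (?T n))) \<longlonglongrightarrow> exp 0"
    by (intro tendsto_intros ln_volume_div_minus_ln_main_term_tendsto[OF qt])
  moreover have "eventually (\<lambda>n. exp (ln (?L n) - ln (?T n)) = ?L n / ?T n) sequentially"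
    using eventually_ge_at_top[of "1::nat"] eventually_nat_floor_mult_ge_1[OF qt]
  proof eventually_elim
    case (elim n)
    have "?L n > 0" by (rule volume_div_pos[OF elim(2)])
    moreover have "?T n > 0"
      using qt elim add_pos_pos[of 1 "1 / qt"] by (auto intro!: mult_pos_pos divide_pos_pos)
    ultimately show ?case by (simp add: exp_diff)
  qed
  ultimately show ?thesis by (simp add: Lim_transform_eventually)
qed

theorem mainTheorem20:
  fixes qt :: real
  assumes "qt > 0"
  shows "(\<lambda>n::nat. real (Mq (nat \<lfloor>qt * real n\<rfloor>) n 1)) \<sim>[at_top]
    (\<lambda>n::nat. 2 powr (real n * (1 + qt) * bin_entropy (1 / (1 + qt)))
        / (sqrt (2 * pi) * real n powr (3/2)) * (1 / qt)
        * (1 + 1 / qt) powr ((of_int \<lfloor>qt * real n\<rfloor> - qt * real n) - 1/2))"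
  using asymp_equivI'[OF Mq_div_volume_tendsto[OF assms]] asymp_equivI'[OF volume_div_tendsto[OF assms]]
  by (rule asymp_equiv_trans)
end
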